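(* Let $X=\{a_1,\dots,a_\ell\}$ be a finite set of $\ell$ distinct points, $N\ge2$, let $\gamma_*$ be an extreme point of $\mathcal{P}_{sym}(X^N)$ and let $\lambda=M_1\gamma_*$. Then: (a) $\gamma_*$ is the unique maximizer over $\gamma\in\mathcal{P}_{sym}(X^N)$ of $$C_\lambda[\gamma]=N^2\sum_{i=1}^\ell\lambda_i(M_1\gamma)_i+C_{GS}[\gamma];$$ (b) in particular, $\gamma_*$ is the unique maximizer of $C_{GS}[\gamma]$ over $\gamma\in\mathcal{P}_{sym}(X^N)$ subject to $M_1\gamma=\lambda$.
   Context: Probability measures on $X$ are identified with vectors $(\lambda_i)$, $\lambda_i=\lambda(\{a_i\})$. The symmetrization operator is $(S\gamma)(A_1\times\cdots\times A_N)=\frac1{N!}\sum_{\sigma\in S_N}\gamma(A_{\sigma(1)}\times\cdots\times A_{\sigma(N)})$; $\mathcal{P}_{sym}(X^N)$ is the set of probability measures $\gamma$ on $X^N$ with $S\gamma=\gamma$; $(M_1\gamma)(A)=\gamma(A\times X^{N-1})$. The Gangbo–Święch cost is $C_{GS}[\gamma]=\int_{X^N}\sum_{1\le i<j\le N}d(x_i,x_j)^p\,d\gamma(x_1,\dots,x_N)$ ($1\le p<\infty$), with $d$ the discrete metric $d(x,y)=1$ for $x\ne y$, $d(x,x)=0$. *)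

theory Defs
  imports Complex_Main "HOL-Combinatorics.Permutations"
begin

text \<open>A point of X^N is represented as a list of length N with entries in X;
  a measure on X^N (finite discrete) is represented by its atom weights
  gamma :: 'a list => real, required to vanish outside X^N.\<close>

definition config :: "'a set \<Rightarrow> nat \<Rightarrow> 'a list set" where
  "config X N = {xs. length xs = N \<and> set xs \<subseteq> X}"

definition prob_on :: "'a set \<Rightarrow> nat \<Rightarrow> ('a list \<Rightarrow> real) \<Rightarrow> bool" where
  "prob_on X N \<gamma> \<longleftrightarrow> (\<forall>xs. \<gamma> xs \<ge> 0) \<and> (\<forall>xs. xs \<notin> config X N \<longrightarrow> \<gamma> xs = 0)
     \<and> (\<Sum>xs\<in>config X N. \<gamma> xs) = 1"

definition perm_conf :: "(nat \<Rightarrow> nat) \<Rightarrow> 'a list \<Rightarrow> 'a list" where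
  "perm_conf \<sigma> xs = map (\<lambda>i. xs ! \<sigma> i) [0..<length xs]"

definition symmetrize :: "nat \<Rightarrow> ('a list \<Rightarrow> real) \<Rightarrow> 'a list \<Rightarrow> real" where
  "symmetrize N \<gamma> xs = (1 / fact N) * (\<Sum>\<sigma>\<in>{\<sigma>. \<sigma> permutes {..<N}}. \<gamma> (perm_conf \<sigma> xs))"

definition Psym :: "'a set \<Rightarrow> nat \<Rightarrow> ('a list \<Rightarrow> real) set" where
  "Psym X N = {\<gamma>. prob_on X N \<gamma> \<and> symmetrize N \<gamma> = \<gamma>}"

definition marg1 :: "'a set \<Rightarrow> nat \<Rightarrow> ('a list \<Rightarrow> real) \<Rightarrow> 'a \<Rightarrow> real" where
  "marg1 X N \<gamma> a = (\<Sum>xs\<in>{xs\<in>config X N. xs ! 0 = a}. \<gamma> xs)"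

definition ddisc :: "'a \<Rightarrow> 'a \<Rightarrow> real" where
  "ddisc x y = (if x = y then 0 else 1)"

definition C_GS :: "real \<Rightarrow> 'a set \<Rightarrow> nat \<Rightarrow> ('a list \<Rightarrow> real) \<Rightarrow> real" where
  "C_GS p X N \<gamma> = (\<Sum>xs\<in>config X N. \<gamma> xs *
      (\<Sum>(i,j)\<in>{(i,j). i < j \<and> j < N}. ddisc (xs ! i) (xs ! j) powr p))"

definition C_lam :: "real \<Rightarrow> 'a set \<Rightarrow> nat \<Rightarrow> ('a \<Rightarrow> real) \<Rightarrow> ('a list \<Rightarrow> real) \<Rightarrow> real" where
  "C_lam p X N lam \<gamma> = (real N)^2 * (\<Sum>a\<in>X. lam a * marg1 X N \<gamma> a) + C_GS p X N \<gamma>"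

definition extreme_pt :: "('a list \<Rightarrow> real) \<Rightarrow> ('a list \<Rightarrow> real) set \<Rightarrow> bool" where
  "extreme_pt g P \<longleftrightarrow> g \<in> P \<and> (\<forall>g1\<in>P. \<forall>g2\<in>P. \<forall>t::real. 0 < t \<and> t < 1 \<and>
      g = (\<lambda>xs. t * g1 xs + (1 - t) * g2 xs) \<longrightarrow> g1 = g2)"

end

theory Submission
  imports Defs
begin

text \<open>Since the discrete metric takes only the values 0 and 1, the pair cost of a configuration
  depends only on its occupation numbers n(a): it has (N^2 - sum_a n(a)^2)/2 unequal pairs.
  For a symmetric plan, N times the first marginal is the expected occupation vector, so with
  lambda = M_1 gamma_* and m = N lambda, completing the square gives
  C_lambda[gamma] = (N^2 + |m|^2)/2 - E_gamma |m - n|^2 / 2.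
  An extreme symmetric plan is the uniform measure on the rearrangements of a single
  configuration x_0, so m = n(x_0) and the defect E_gamma |m - n|^2 vanishes exactly for the
  symmetric plans carried by the orbit of x_0, of which gamma_* is the only one.\<close>

definition occupation :: "'a list \<Rightarrow> 'a \<Rightarrow> real" where
  "occupation xs a = real (count (mset xs) a)"

lemma occupation_eq_sum: "occupation xs a = (\<Sum>i<length xs. if xs ! i = a then 1 else 0)"
proof -
  have "count (mset xs) a = card {i. i < length xs \<and> a = xs ! i}"
    by (simp add: count_mset count_list_eq_length_filter length_filter_conv_card)
  also have "{i. i < length xs \<and> a = xs ! i} = {..<length xs} \<inter> {i. xs ! i = a}" by auto
  finally show ?thesis by (simp add: occupation_def sum.If_cases)
qed

lemma mset_eq_iff_occupation_eq_on:
  assumes "set xs \<subseteq> X" "set ys \<subseteq> X"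
  shows "mset xs = mset ys \<longleftrightarrow> (\<forall>a\<in>X. occupation xs a = occupation ys a)"
proof
  assume "\<forall>a\<in>X. occupation xs a = occupation ys a"
  then show "mset xs = mset ys"
    using assms by (intro multiset_eqI) (metis count_mset_0_iff in_mono occupation_def of_nat_eq_iff)
qed (simp add: occupation_def)

lemma sum_upper_pairs_symmetric:
  fixes d :: "nat \<Rightarrow> nat \<Rightarrow> real"
  assumes "\<And>i j. d i j = d j i" "\<And>i. d i i = 0"
  shows "2 * (\<Sum>(i,j)\<in>{(i,j). i < j \<and> j < N}. d i j) = (\<Sum>i<N. \<Sum>j<N. d i j)"
proof (induction N)
  case 0
  then show ?case by simp
next
  case (Suc N)
  have split: "{(i,j). i < j \<and> j < Suc N} = {(i,j). i < j \<and> j < N} \<union> (\<lambda>i. (i,N)) ` {..<N}"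
    by auto
  have fin: "finite {(i,j). i < j \<and> j < N}"
    by (rule finite_subset[of _ "{..<N} \<times> {..<N}"]) auto
  have "(\<Sum>(i,j)\<in>{(i,j). i < j \<and> j < Suc N}. d i j)
      = (\<Sum>(i,j)\<in>{(i,j). i < j \<and> j < N}. d i j) + (\<Sum>i<N. d i N)"
    unfolding split by (subst sum.union_disjoint) (auto simp: fin sum.reindex inj_on_def)
  moreover have "(\<Sum>i<Suc N. \<Sum>j<Suc N. d i j) = (\<Sum>i<N. \<Sum>j<N. d i j) + 2 * (\<Sum>i<N. d i N)"
    by (simp add: sum.distrib assms(2)) (simp add: assms(1)[of N])
  ultimately show ?case using Suc by simp
qed

lemma ddisc_powr [simp]: "ddisc x y powr p = ddisc x y"
  by (simp add: ddisc_def)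

lemma pair_cost_eq_occupation:
  assumes "finite X" and u: "u \<in> config X N"
  shows "2 * (\<Sum>(i,j)\<in>{(i,j). i < j \<and> j < N}. ddisc (u ! i) (u ! j) powr p)
     = real N ^ 2 - (\<Sum>a\<in>X. occupation u a ^ 2)"
proof -
  have len: "length u = N" and sX: "set u \<subseteq> X" using u by (auto simp: config_def)
  have in_X: "u ! i \<in> X" if "i < N" for i using that len sX nth_mem by blast
  have sum_squares: "(\<Sum>i<N. occupation u (u ! i)) = (\<Sum>a\<in>X. occupation u a ^ 2)"
  proof -
    have "(\<Sum>i<N. occupation u (u ! i))
        = (\<Sum>i<N. \<Sum>a\<in>X. if u ! i = a then occupation u a else 0)"
      using in_X \<open>finite X\<close> by (simp add: sum.delta)
    also have "\<dots> = (\<Sum>a\<in>X. occupation u a * (\<Sum>i<N. if u ! i = a then 1 else 0))"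
      by (subst sum.swap) (simp add: sum_distrib_left if_distrib cong: if_cong)
    also have "\<dots> = (\<Sum>a\<in>X. occupation u a ^ 2)"
      by (simp add: occupation_eq_sum[of u] len power2_eq_square)
    finally show ?thesis .
  qed
  have "2 * (\<Sum>(i,j)\<in>{(i,j). i < j \<and> j < N}. ddisc (u ! i) (u ! j) powr p)
      = (\<Sum>i<N. \<Sum>j<N. ddisc (u ! i) (u ! j))"
    by (simp, rule sum_upper_pairs_symmetric) (auto simp: ddisc_def)
  also have "\<dots> = (\<Sum>i<N. real N - occupation u (u ! i))"
  proof (rule sum.cong[OF refl])
    fix i
    have "(\<Sum>j<N. ddisc (u ! i) (u ! j)) = (\<Sum>j<N. 1 - (if u ! j = u ! i then 1 else 0))"
      by (intro sum.cong refl) (auto simp: ddisc_def)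
    then show "(\<Sum>j<N. ddisc (u ! i) (u ! j)) = real N - occupation u (u ! i)"
      by (simp add: sum_subtractf occupation_eq_sum len)
  qed
  also have "\<dots> = real N ^ 2 - (\<Sum>a\<in>X. occupation u a ^ 2)"
    by (simp add: sum_subtractf sum_squares power2_eq_square)
  finally show ?thesis .
qed

lemma finite_config: "finite X \<Longrightarrow> finite (config X N)"
  unfolding config_def using finite_lists_length_eq[of X N] by (simp add: conj_commute)

lemma permute_list_in_config:
  "xs \<in> config X N \<Longrightarrow> \<sigma> permutes {..<N} \<Longrightarrow> permute_list \<sigma> xs \<in> config X N"
  by (simp add: config_def)

lemma symmetrize_eq_sum_permute_list:
  "symmetrize N \<gamma> xs = (1 / fact N) * (\<Sum>\<sigma>\<in>{\<sigma>. \<sigma> permutes {..<N}}. \<gamma> (permute_list \<sigma> xs))"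
  by (simp add: symmetrize_def perm_conf_def permute_list_def)

lemma Psym_permute_list:
  assumes "\<gamma> \<in> Psym X N" "length xs = N" "\<sigma> permutes {..<N}"
  shows "\<gamma> (permute_list \<sigma> xs) = \<gamma> xs"
proof -
  have sym: "symmetrize N \<gamma> = \<gamma>" using assms(1) by (simp add: Psym_def)
  have "(\<Sum>\<tau>\<in>{\<tau>. \<tau> permutes {..<N}}. \<gamma> (permute_list \<tau> (permute_list \<sigma> xs)))
      = (\<Sum>\<tau>\<in>{\<tau>. \<tau> permutes {..<N}}. \<gamma> (permute_list (\<sigma> \<circ> \<tau>) xs))"
    using assms(2) by (intro sum.cong refl) (simp add: permute_list_compose)
  also have "\<dots> = (\<Sum>\<tau>\<in>{\<tau>. \<tau> permutes {..<N}}. \<gamma> (permute_list \<tau> xs))"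
    using setum_permutations_compose_left[OF assms(3), of "\<lambda>\<tau>. \<gamma> (permute_list \<tau> xs)"] by simp
  finally have "symmetrize N \<gamma> (permute_list \<sigma> xs) = symmetrize N \<gamma> xs"
    by (simp add: symmetrize_eq_sum_permute_list)
  then show ?thesis using sym by simp
qed

lemma symmetrize_eq_if_permute_invariant:
  assumes "prob_on X N \<gamma>"
    and inv: "\<And>xs \<sigma>. length xs = N \<Longrightarrow> \<sigma> permutes {..<N} \<Longrightarrow> \<gamma> (permute_list \<sigma> xs) = \<gamma> xs"
  shows "symmetrize N \<gamma> = \<gamma>"
proof
  fix xs :: "'a list"
  show "symmetrize N \<gamma> xs = \<gamma> xs"
  proof (cases "length xs = N")
    case True
    have "card {\<sigma>. \<sigma> permutes {..<N}} = fact N" by (rule card_permutations) auto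
    with True show ?thesis by (simp add: symmetrize_eq_sum_permute_list inv)
  next
    case False
    then have "\<gamma> (permute_list \<sigma> xs) = 0" "\<gamma> xs = 0" for \<sigma>
      using assms(1) by (simp_all add: prob_on_def config_def)
    then show ?thesis by (simp add: symmetrize_eq_sum_permute_list)
  qed
qed

lemma Psym_coordinate_marginal:
  assumes "\<gamma> \<in> Psym X N" and "k < N"
  shows "(\<Sum>xs\<in>{xs\<in>config X N. xs ! k = a}. \<gamma> xs) = marg1 X N \<gamma> a"
proof -
  define \<tau> where "\<tau> = transpose 0 k"
  have \<tau>: "\<tau> permutes {..<N}" unfolding \<tau>_def using \<open>k < N\<close> by (intro permutes_swap_id) auto
  have invol: "permute_list \<tau> (permute_list \<tau> xs) = xs" if "length xs = N" for xs
  proof -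
    have "permute_list \<tau> (permute_list \<tau> xs) = permute_list (\<tau> \<circ> \<tau>) xs"
      using that \<tau> by (simp add: permute_list_compose)
    then show ?thesis by (simp add: \<tau>_def)
  qed
  show ?thesis unfolding marg1_def
  proof (rule sum.reindex_bij_witness[where i="permute_list \<tau>" and j="permute_list \<tau>"])
    fix xs assume xs: "xs \<in> {xs\<in>config X N. xs ! k = a}"
    then have len: "length xs = N" by (simp add: config_def)
    show "permute_list \<tau> (permute_list \<tau> xs) = xs" using invol[OF len] .
    show "permute_list \<tau> xs \<in> {xs\<in>config X N. xs ! 0 = a}"
      using xs \<tau> len \<open>k < N\<close> by (simp add: permute_list_in_config permute_list_nth \<tau>_def)
    show "\<gamma> (permute_list \<tau> xs) = \<gamma> xs" using Psym_permute_list[OF assms(1) len \<tau>] .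
  next
    fix xs assume xs: "xs \<in> {xs\<in>config X N. xs ! 0 = a}"
    then have len: "length xs = N" by (simp add: config_def)
    show "permute_list \<tau> (permute_list \<tau> xs) = xs" using invol[OF len] .
    show "permute_list \<tau> xs \<in> {xs\<in>config X N. xs ! k = a}"
      using xs \<tau> len \<open>k < N\<close> by (simp add: permute_list_in_config permute_list_nth \<tau>_def)
  qed
qed

lemma Psym_marg1_eq_expected_occupation:
  assumes "finite X" and "\<gamma> \<in> Psym X N"
  shows "real N * marg1 X N \<gamma> a = (\<Sum>xs\<in>config X N. \<gamma> xs * occupation xs a)"
proof -
  have fin: "finite (config X N)" using \<open>finite X\<close> by (rule finite_config)
  have "(\<Sum>xs\<in>config X N. \<gamma> xs * occupation xs a)
      = (\<Sum>xs\<in>config X N. \<Sum>k<N. if xs ! k = a then \<gamma> xs else 0)"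
    by (intro sum.cong refl)
      (simp add: occupation_eq_sum sum_distrib_left if_distrib config_def cong: if_cong)
  also have "\<dots> = (\<Sum>k<N. \<Sum>xs\<in>{xs\<in>config X N. xs ! k = a}. \<gamma> xs)"
    by (subst sum.swap) (simp add: sum.inter_filter[OF fin])
  also have "\<dots> = (\<Sum>k<N. marg1 X N \<gamma> a)"
    using assms(2) by (intro sum.cong refl Psym_coordinate_marginal) auto
  finally show ?thesis by simp
qed

lemma C_lam_Psym_eq:
  assumes "finite X" and g: "\<gamma> \<in> Psym X N"
  shows "C_lam p X N lam \<gamma>
    = (real N ^ 2 + (\<Sum>a\<in>X. (real N * lam a) ^ 2)) / 2
      - (\<Sum>xs\<in>config X N. \<gamma> xs * (\<Sum>a\<in>X. (real N * lam a - occupation xs a) ^ 2)) / 2"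
proof -
  define n where "n a = real N * lam a" for a
  define Q where "Q = (real N ^ 2 + (\<Sum>a\<in>X. n a ^ 2)) / 2"
  define h where "h xs = (\<Sum>a\<in>X. (n a - occupation xs a) ^ 2)" for xs
  have "(real N)^2 * (\<Sum>a\<in>X. lam a * marg1 X N \<gamma> a) = (\<Sum>a\<in>X. n a * (real N * marg1 X N \<gamma> a))"
    by (simp add: n_def sum_distrib_left power2_eq_square algebra_simps)
  also have "\<dots> = (\<Sum>xs\<in>config X N. \<gamma> xs * (\<Sum>a\<in>X. n a * occupation xs a))"
    by (simp add: Psym_marg1_eq_expected_occupation assms sum_distrib_left sum.swap[of _ X] algebra_simps)
  finally have marg_term: "(real N)^2 * (\<Sum>a\<in>X. lam a * marg1 X N \<gamma> a)
      = (\<Sum>xs\<in>config X N. \<gamma> xs * (\<Sum>a\<in>X. n a * occupation xs a))" .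
  have cost_term: "C_GS p X N \<gamma>
      = (\<Sum>xs\<in>config X N. \<gamma> xs * ((real N ^ 2 - (\<Sum>a\<in>X. occupation xs a ^ 2)) / 2))"
    unfolding C_GS_def
    using pair_cost_eq_occupation[OF \<open>finite X\<close>, where p = p]
    by (intro sum.cong refl) (simp add: eq_divide_eq mult.commute)
  have square: "(\<Sum>a\<in>X. n a * occupation xs a) + (real N ^ 2 - (\<Sum>a\<in>X. occupation xs a ^ 2)) / 2
      = Q - h xs / 2" for xs
    unfolding Q_def h_def
    by (simp add: power2_diff sum.distrib sum_subtractf sum_distrib_left mult.assoc field_simps)
  have "C_lam p X N lam \<gamma> = (\<Sum>xs\<in>config X N. \<gamma> xs * (Q - h xs / 2))"
    unfolding C_lam_def marg_term cost_term square[symmetric]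
    by (simp add: sum.distrib[symmetric] algebra_simps)
  also have "\<dots> = Q * (\<Sum>xs\<in>config X N. \<gamma> xs) - (\<Sum>xs\<in>config X N. \<gamma> xs * h xs) / 2"
    by (simp add: right_diff_distrib sum_subtractf sum_distrib_left sum_divide_distrib mult.commute)
  also have "(\<Sum>xs\<in>config X N. \<gamma> xs) = 1" using g by (simp add: Psym_def prob_on_def)
  finally show ?thesis by (simp add: Q_def h_def n_def)
qed

lemma Psym_restrict_normalize:
  assumes g: "\<gamma> \<in> Psym X N"
    and P: "\<And>xs \<sigma>. length xs = N \<Longrightarrow> \<sigma> permutes {..<N} \<Longrightarrow> P (permute_list \<sigma> xs) = P xs"
    and s: "s = (\<Sum>xs\<in>config X N. if P xs then \<gamma> xs else 0)" and "0 < s"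
  shows "(\<lambda>xs. if P xs then \<gamma> xs / s else 0) \<in> Psym X N"
proof -
  have "(\<Sum>xs\<in>config X N. if P xs then \<gamma> xs / s else 0) = s / s"
    unfolding s sum_divide_distrib by (intro sum.cong refl) simp
  then have prob: "prob_on X N (\<lambda>xs. if P xs then \<gamma> xs / s else 0)"
    using g \<open>0 < s\<close> by (auto simp: Psym_def prob_on_def)
  show ?thesis unfolding Psym_def
    by (intro CollectI conjI prob symmetrize_eq_if_permute_invariant[OF prob])
      (simp add: P Psym_permute_list[OF g])
qed

lemma prob_on_obtain_pos:
  assumes "prob_on X N \<gamma>"
  obtains x0 where "x0 \<in> config X N" and "0 < \<gamma> x0"
proof -
  have "\<exists>x0\<in>config X N. \<gamma> x0 \<noteq> 0"
    using assms by (metis prob_on_def sum.neutral zero_neq_one)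
  then show ?thesis using assms that by (metis less_eq_real_def prob_on_def)
qed

text \<open>An extreme point cannot split its mass between the orbit of x_0 and its complement, both
  being permutation invariant sets.\<close>

lemma extreme_pt_Psym_supported_on_orbit:
  assumes "finite X" and ext: "extreme_pt \<gamma>s (Psym X N)"
    and x0: "x0 \<in> config X N" and pos: "0 < \<gamma>s x0"
    and ne: "mset xs \<noteq> mset x0"
  shows "\<gamma>s xs = 0"
proof (rule ccontr)
  assume "\<gamma>s xs \<noteq> 0"
  have g: "\<gamma>s \<in> Psym X N" using ext by (simp add: extreme_pt_def)
  have fin: "finite (config X N)" using \<open>finite X\<close> by (rule finite_config)
  have nonneg: "\<And>ys. 0 \<le> \<gamma>s ys" and xs: "xs \<in> config X N"
    using g \<open>\<gamma>s xs \<noteq> 0\<close> by (auto simp: Psym_def prob_on_def)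
  have mass_pos: "0 < (\<Sum>ys\<in>config X N. if Q ys then \<gamma>s ys else 0)"
    if "y \<in> config X N" "Q y" "0 < \<gamma>s y" for Q y
  proof -
    have "\<gamma>s y \<le> (\<Sum>ys\<in>config X N. if Q ys then \<gamma>s ys else 0)"
      using member_le_sum[OF _ _ fin, of y "\<lambda>ys. if Q ys then \<gamma>s ys else 0"] that nonneg by simp
    with that show ?thesis by simp
  qed
  define t where "t = (\<Sum>ys\<in>config X N. if mset ys = mset x0 then \<gamma>s ys else 0)"
  define t' where "t' = (\<Sum>ys\<in>config X N. if mset ys \<noteq> mset x0 then \<gamma>s ys else 0)"
  have "0 < t" unfolding t_def using x0 pos by (intro mass_pos) auto
  have "0 < t'" unfolding t'_def
    using xs ne nonneg[of xs] \<open>\<gamma>s xs \<noteq> 0\<close> by (intro mass_pos) auto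
  have "t + t' = (\<Sum>ys\<in>config X N. \<gamma>s ys)" unfolding t_def t'_def sum.distrib[symmetric]
    by (intro sum.cong refl) simp
  then have total: "t + t' = 1" using g by (simp add: Psym_def prob_on_def)
  define g1 where "g1 = (\<lambda>ys. if mset ys = mset x0 then \<gamma>s ys / t else 0)"
  define g2 where "g2 = (\<lambda>ys. if mset ys \<noteq> mset x0 then \<gamma>s ys / t' else 0)"
  have "g1 \<in> Psym X N" unfolding g1_def
    by (rule Psym_restrict_normalize[OF g _ t_def \<open>0 < t\<close>]) simp
  moreover have "g2 \<in> Psym X N" unfolding g2_def
    by (rule Psym_restrict_normalize[OF g _ t'_def \<open>0 < t'\<close>]) simp
  moreover have "\<gamma>s = (\<lambda>ys. t * g1 ys + (1 - t) * g2 ys)"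
  proof -
    have "1 - t = t'" using total by simp
    then show ?thesis using \<open>0 < t\<close> \<open>0 < t'\<close> by (auto simp: fun_eq_iff g1_def g2_def)
  qed
  ultimately have "g1 = g2"
    using ext \<open>0 < t\<close> \<open>0 < t'\<close> total unfolding extreme_pt_def by force
  then have "g1 x0 = g2 x0" by simp
  then show False using pos \<open>0 < t\<close> by (simp add: g1_def g2_def)
qed

lemma Psym_supported_on_orbit_eq_uniform:
  assumes "finite X" and g: "\<gamma> \<in> Psym X N" and x0: "x0 \<in> config X N"
    and supp: "\<And>xs. mset xs \<noteq> mset x0 \<Longrightarrow> \<gamma> xs = 0"
  shows "\<gamma> = (\<lambda>xs. if mset xs = mset x0
              then 1 / real (card {xs\<in>config X N. mset xs = mset x0}) else 0)"
proof -
  let ?K = "{xs\<in>config X N. mset xs = mset x0}"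
  have len: "length x0 = N" using x0 by (simp add: config_def)
  have const: "\<gamma> xs = (if mset xs = mset x0 then \<gamma> x0 else 0)" for xs
  proof (cases "mset xs = mset x0")
    case True
    then obtain \<sigma> where \<sigma>: "\<sigma> permutes {..<N}" "permute_list \<sigma> x0 = xs"
      using mset_eq_permutation[of xs x0] len by blast
    then show ?thesis using Psym_permute_list[OF g len \<sigma>(1)] True by simp
  qed (simp add: supp)
  have "1 = (\<Sum>xs\<in>config X N. \<gamma> xs)" using g by (simp add: Psym_def prob_on_def)
  also have "\<dots> = (\<Sum>xs\<in>config X N. if mset xs = mset x0 then \<gamma> x0 else 0)"
    by (intro sum.cong refl const)
  also have "\<dots> = (\<Sum>xs\<in>?K. \<gamma> x0)"
    by (rule sum.inter_filter[OF finite_config[OF \<open>finite X\<close>], symmetric])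
  also have "\<dots> = real (card ?K) * \<gamma> x0" by simp
  finally have "1 = real (card ?K) * \<gamma> x0" .
  then have weight: "\<gamma> x0 = 1 / real (card ?K)"
    by (cases "card ?K = 0") (simp_all add: field_simps)
  show ?thesis by (subst (1) const[abs_def]) (simp only: weight)
qed

lemma marg1_supported_on_orbit:
  assumes "finite X" and g: "\<gamma> \<in> Psym X N"
    and supp: "\<And>xs. mset xs \<noteq> mset x0 \<Longrightarrow> \<gamma> xs = 0"
  shows "real N * marg1 X N \<gamma> a = occupation x0 a"
proof -
  have "real N * marg1 X N \<gamma> a = (\<Sum>xs\<in>config X N. \<gamma> xs * occupation x0 a)"
    unfolding Psym_marg1_eq_expected_occupation[OF assms(1,2)]
    by (intro sum.cong refl) (metis mult_zero_left occupation_def supp)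
  also have "\<dots> = occupation x0 a"
    using g by (simp add: sum_distrib_right[symmetric] Psym_def prob_on_def)
  finally show ?thesis .
qed

lemma orbit_defect_pos:
  assumes "finite X" and g: "\<gamma> \<in> Psym X N" and gs: "\<gamma>s \<in> Psym X N" and x0: "x0 \<in> config X N"
    and supp: "\<And>xs. mset xs \<noteq> mset x0 \<Longrightarrow> \<gamma>s xs = 0" and "\<gamma> \<noteq> \<gamma>s"
  shows "0 < (\<Sum>xs\<in>config X N. \<gamma> xs * (\<Sum>a\<in>X. (occupation x0 a - occupation xs a) ^ 2))"
    (is "0 < (\<Sum>xs\<in>_. \<gamma> xs * ?h xs)")
proof (rule ccontr)
  assume not_pos: "\<not> 0 < (\<Sum>xs\<in>config X N. \<gamma> xs * ?h xs)"
  have nonneg: "0 \<le> \<gamma> xs * ?h xs" for xs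
    using g by (intro mult_nonneg_nonneg sum_nonneg) (auto simp: Psym_def prob_on_def)
  then have "0 \<le> (\<Sum>xs\<in>config X N. \<gamma> xs * ?h xs)" by (intro sum_nonneg)
  then have "(\<Sum>xs\<in>config X N. \<gamma> xs * ?h xs) = 0" using not_pos by linarith
  then have zero: "\<gamma> xs * ?h xs = 0" if "xs \<in> config X N" for xs
    using that by (simp add: sum_nonneg_eq_0_iff[OF finite_config[OF \<open>finite X\<close>]] nonneg)
  have "\<gamma> xs = 0" if "mset xs \<noteq> mset x0" for xs
  proof (cases "xs \<in> config X N")
    case True
    then have "\<exists>a\<in>X. occupation xs a \<noteq> occupation x0 a"
      using that x0 mset_eq_iff_occupation_eq_on[of xs X x0] by (auto simp: config_def)
    then obtain a where "a \<in> X" "occupation xs a \<noteq> occupation x0 a" ..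
    then have "0 < ?h xs" using \<open>finite X\<close> by (intro sum_pos2[where i = a]) auto
    then show ?thesis using zero[OF True] by simp
  next
    case False
    then show ?thesis using g by (simp add: Psym_def prob_on_def)
  qed
  then have "\<gamma> = \<gamma>s"
    using Psym_supported_on_orbit_eq_uniform[OF \<open>finite X\<close> g x0]
      Psym_supported_on_orbit_eq_uniform[OF \<open>finite X\<close> gs x0 supp] by simp
  with \<open>\<gamma> \<noteq> \<gamma>s\<close> show False ..
qed

theorem corollary3p3:
  fixes X :: "'a set" and N :: nat and p :: real
    and \<gamma>s :: "'a list \<Rightarrow> real" and lam :: "'a \<Rightarrow> real"
  assumes "finite X" and "N \<ge> 2" and "1 \<le> p"
    and "extreme_pt \<gamma>s (Psym X N)"
    and "lam = marg1 X N \<gamma>s"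
  shows "(\<forall>\<gamma>\<in>Psym X N. \<gamma> \<noteq> \<gamma>s \<longrightarrow> C_lam p X N lam \<gamma> < C_lam p X N lam \<gamma>s)
    \<and> (\<forall>\<gamma>\<in>Psym X N. marg1 X N \<gamma> = lam \<and> \<gamma> \<noteq> \<gamma>s \<longrightarrow> C_GS p X N \<gamma> < C_GS p X N \<gamma>s)"
proof -
  have gs: "\<gamma>s \<in> Psym X N" using assms(4) by (simp add: extreme_pt_def)
  then obtain x0 where x0: "x0 \<in> config X N" "0 < \<gamma>s x0"
    by (auto simp: Psym_def elim: prob_on_obtain_pos)
  have supp: "\<And>xs. mset xs \<noteq> mset x0 \<Longrightarrow> \<gamma>s xs = 0"
    using extreme_pt_Psym_supported_on_orbit[OF \<open>finite X\<close> assms(4) x0] .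
  define defect where "defect \<gamma> =
    (\<Sum>xs\<in>config X N. \<gamma> xs * (\<Sum>a\<in>X. (occupation x0 a - occupation xs a) ^ 2))" for \<gamma>
  have "real N * lam a = occupation x0 a" for a
    unfolding assms(5) using marg1_supported_on_orbit[OF \<open>finite X\<close> gs supp] .
  then have cost: "C_lam p X N lam \<gamma> = (real N ^ 2 + (\<Sum>a\<in>X. occupation x0 a ^ 2)) / 2 - defect \<gamma> / 2"
    if "\<gamma> \<in> Psym X N" for \<gamma>
    using C_lam_Psym_eq[OF \<open>finite X\<close> that] by (simp add: defect_def)
  have "\<gamma>s xs * (\<Sum>a\<in>X. (occupation x0 a - occupation xs a) ^ 2) = 0" for xs
    by (cases "mset xs = mset x0") (simp_all add: supp occupation_def)
  then have "defect \<gamma>s = 0" unfolding defect_def by (intro sum.neutral) blast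
  then have max: "C_lam p X N lam \<gamma> < C_lam p X N lam \<gamma>s" if "\<gamma> \<in> Psym X N" "\<gamma> \<noteq> \<gamma>s" for \<gamma>
    using cost[OF that(1)] cost[OF gs]
      orbit_defect_pos[OF \<open>finite X\<close> that(1) gs x0(1) supp that(2), folded defect_def]
    by linarith
  moreover have "C_GS p X N \<gamma> < C_GS p X N \<gamma>s"
    if "\<gamma> \<in> Psym X N" "marg1 X N \<gamma> = lam" "\<gamma> \<noteq> \<gamma>s" for \<gamma>
    using max[OF that(1,3)] that(2) unfolding C_lam_def assms(5) by simp
  ultimately show ?thesis by blast
qed

end
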